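(* Let $q\geqslant 2$ be an integer. For $j=1,2$ let $\mathscr T_j=(V_j,\mathcal E_j)$ be a leafless, locally finite rooted directed tree with root $\mathsf{root}_j$, let $S^{(j)}_{\lambda,q}$ be the Dirichlet shift on $\mathscr T_j$, let $V^{(j)}_{\prec}$ be the set of branching vertices of $\mathscr T_j$, and let $\mathcal G^{(j)}_n:=\mathsf{Chi}^{\langle n\rangle}(\mathsf{root}_j)$ (the vertices of depth $n$ in $\mathscr T_j$), $n\in\mathbb N$. Then $S^{(1)}_{\lambda,q}$ is unitarily equivalent to $S^{(2)}_{\lambda,q}$ if and only if for every $n\in\mathbb N$, $$\sum_{v\in V^{(1)}_{\prec}\cap\mathcal G^{(1)}_n}\big(\mathrm{card}(\mathsf{Chi}(v))-1\big)=\sum_{v\in V^{(2)}_{\prec}\cap\mathcal G^{(2)}_n}\big(\mathrm{card}(\mathsf{Chi}(v))-1\big).$$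
   Context: A directed tree $\mathscr T=(V,\mathcal E)$ is a directed graph ($\mathcal E\subseteq V\times V$ without loops) with no circuits, which is connected and in which every vertex other than a root has a unique parent; it is rooted if it has a unique vertex $\mathsf{root}$ with no parent. For $v\in V$, $\mathsf{Chi}(v)=\{u:(v,u)\in\mathcal E\}$, and $\mathsf{Chi}^{\langle 0\rangle}(W)=W$, $\mathsf{Chi}^{\langle n\rangle}(W)=\bigcup_{u\in \mathsf{Chi}^{\langle n-1\rangle}(W)}\mathsf{Chi}(u)$. The tree is locally finite if every $\mathsf{Chi}(v)$ is finite, leafless if every $\mathsf{Chi}(v)$ is nonempty; $V$ is assumed countably infinite. The depth $n_v$ of $v$ is the unique $n$ with $v\in\mathsf{Chi}^{\langle n\rangle}(\mathsf{root})$. The set of branching vertices is $V_\prec=\{v\in V:\mathrm{card}(\mathsf{Chi}(v))\geqslant 2\}$. On $\ell^2(V)$ with orthonormal basis $\{e_u\}_{u\in V}$, the weighted shift with weights $\{\lambda_u\}_{u\ne\mathsf{root}}$ is the operator $S_\lambda e_v=\sum_{u\in\mathsf{Chi}(v)}\lambda_u e_u$. For real $q\geqslant 1$, the Dirichlet shift $S_{\lambda,q}$ on $\mathscr T$ is the (bounded) weighted shift with weights $\lambda_{u,q}=\frac{1}{\sqrt{\mathrm{card}(\mathsf{Chi}(v))}}\sqrt{\frac{n_v+q}{n_v+1}}$ for $u\in\mathsf{Chi}(v)$, $v\in V$. *)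

theory Defs
  imports "HOL-Analysis.Analysis"
begin

definition Chi :: "('a \<times> 'a) set \<Rightarrow> 'a \<Rightarrow> 'a set" where
  "Chi E v = {u. (v, u) \<in> E}"

fun Chi_pow :: "('a \<times> 'a) set \<Rightarrow> nat \<Rightarrow> 'a set \<Rightarrow> 'a set" where
  "Chi_pow E 0 W = W"
| "Chi_pow E (Suc n) W = (\<Union>u\<in>Chi_pow E n W. Chi E u)"

definition rooted_tree :: "'a set \<Rightarrow> ('a \<times> 'a) set \<Rightarrow> 'a \<Rightarrow> bool" where
  "rooted_tree V E r \<longleftrightarrow>
     E \<subseteq> V \<times> V \<and> (\<forall>v. (v, v) \<notin> E) \<and> acyclic E \<and>
     countable V \<and> infinite V \<and>
     r \<in> V \<and> (\<forall>v. (v, r) \<notin> E) \<and>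
     (\<forall>u\<in>V - {r}. \<exists>!v. (v, u) \<in> E) \<and>
     (\<forall>u\<in>V. (r, u) \<in> E\<^sup>*)"

definition locally_finite :: "'a set \<Rightarrow> ('a \<times> 'a) set \<Rightarrow> bool" where
  "locally_finite V E \<longleftrightarrow> (\<forall>v\<in>V. finite (Chi E v))"

definition leafless :: "'a set \<Rightarrow> ('a \<times> 'a) set \<Rightarrow> bool" where
  "leafless V E \<longleftrightarrow> (\<forall>v\<in>V. Chi E v \<noteq> {})"

definition depth :: "('a \<times> 'a) set \<Rightarrow> 'a \<Rightarrow> 'a \<Rightarrow> nat" where
  "depth E r v = (THE n. v \<in> Chi_pow E n {r})"

definition branching :: "'a set \<Rightarrow> ('a \<times> 'a) set \<Rightarrow> 'a set" where
  "branching V E = {v\<in>V. card (Chi E v) \<ge> 2}"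

text \<open>Dirichlet weight of the vertex u, where u is a child of v.\<close>
definition dirichlet_weight :: "('a \<times> 'a) set \<Rightarrow> 'a \<Rightarrow> real \<Rightarrow> 'a \<Rightarrow> 'a \<Rightarrow> real" where
  "dirichlet_weight E r q v u =
     (1 / sqrt (real (card (Chi E v)))) *
     sqrt ((real (depth E r v) + q) / (real (depth E r v) + 1))"

text \<open>The Hilbert space \<open>\<ell>\<^sup>2(V)\<close> as complex functions supported on V.\<close>
definition l2 :: "'a set \<Rightarrow> ('a \<Rightarrow> complex) set" where
  "l2 V = {f. (\<forall>v. v \<notin> V \<longrightarrow> f v = 0) \<and> (\<lambda>v. (cmod (f v))\<^sup>2) summable_on V}"

definition l2_norm :: "'a set \<Rightarrow> ('a \<Rightarrow> complex) \<Rightarrow> real" where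
  "l2_norm V f = sqrt (\<Sum>\<^sub>\<infinity>v\<in>V. (cmod (f v))\<^sup>2)"

text \<open>Dirichlet shift: \<open>S e_v = \<Sum>_{u\<in>Chi v} \<lambda>_u e_u\<close>, i.e. on coordinates
  \<open>(S f)(u) = \<Sum>_{v parent of u} \<lambda>_u f(v)\<close> (the parent is unique, none for the root).\<close>
definition dirichlet_shift ::
  "'a set \<Rightarrow> ('a \<times> 'a) set \<Rightarrow> 'a \<Rightarrow> real \<Rightarrow> ('a \<Rightarrow> complex) \<Rightarrow> ('a \<Rightarrow> complex)" where
  "dirichlet_shift V E r q f = (\<lambda>u. if u \<in> V then
      (\<Sum>v\<in>{v\<in>V. (v, u) \<in> E}. complex_of_real (dirichlet_weight E r q v u) * f v) else 0)"

definition unitarily_equivalent ::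
  "'a set \<Rightarrow> (('a \<Rightarrow> complex) \<Rightarrow> ('a \<Rightarrow> complex)) \<Rightarrow>
   'b set \<Rightarrow> (('b \<Rightarrow> complex) \<Rightarrow> ('b \<Rightarrow> complex)) \<Rightarrow> bool" where
  "unitarily_equivalent V1 S1 V2 S2 \<longleftrightarrow>
     (\<exists>U. bij_betw U (l2 V1) (l2 V2) \<and>
        (\<forall>f\<in>l2 V1. \<forall>g\<in>l2 V1. U (\<lambda>v. f v + g v) = (\<lambda>w. U f w + U g w)) \<and>
        (\<forall>f\<in>l2 V1. \<forall>c. U (\<lambda>v. c * f v) = (\<lambda>w. c * U f w)) \<and>
        (\<forall>f\<in>l2 V1. l2_norm V2 (U f) = l2_norm V1 f) \<and>
        (\<forall>f\<in>l2 V1. U (S1 f) = S2 (U f)))"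

end

theory Submission
  imports Defs
begin

text \<open>The Dirichlet shift maps the vertices of depth \<open>n\<close> to those of depth \<open>n + 1\<close> and multiplies
  inner products of functions living on depth \<open>n\<close> by \<open>(n + q) / (n + 1)\<close>. Hence orthonormal bases
  of the generations can be chosen recursively so that the shift maps the \<open>i\<close>-th basis vector of
  depth \<open>n\<close> to a multiple of the \<open>i\<close>-th one of depth \<open>n + 1\<close>; in these coordinates the shift only
  depends on the generation sizes, so trees with equal generation sizes give unitarily
  equivalent shifts. Conversely, since \<open>q > 1\<close> the factors \<open>(n + q) / (n + 1)\<close> are pairwise
  distinct, and the functions supported on depth \<open>n\<close> are exactly those by which the form
  \<open>\<parallel>S h\<parallel>\<^sup>2 - (n + q) / (n + 1) * \<parallel>h\<parallel>\<^sup>2\<close> is translation invariant. A unitary equivalence preserves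
  this form, so it maps functions on depth \<open>n\<close> of one tree isometrically to functions on depth
  \<open>n\<close> of the other, and the generation sizes agree. Finally, the sum over the branching vertices
  of depth \<open>n\<close> of \<open>card (Chi v) - 1\<close> is the difference of the sizes of generations \<open>n + 1\<close>
  and \<open>n\<close>.\<close>

section \<open>Finite-dimensional inner products\<close>

definition inner_on :: "'a set \<Rightarrow> ('a \<Rightarrow> complex) \<Rightarrow> ('a \<Rightarrow> complex) \<Rightarrow> complex" where
  "inner_on X f g = (\<Sum>x\<in>X. f x * cnj (g x))"

lemma inner_on_cong:
  "(\<And>x. x \<in> X \<Longrightarrow> f x = f' x) \<Longrightarrow> (\<And>x. x \<in> X \<Longrightarrow> g x = g' x) \<Longrightarrow>
   inner_on X f g = inner_on X f' g'"
  unfolding inner_on_def by (rule sum.cong) auto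

lemma inner_on_commute: "cnj (inner_on X f g) = inner_on X g f"
  unfolding inner_on_def by (simp add: mult.commute)

lemma inner_on_self: "inner_on X f f = of_real (\<Sum>x\<in>X. (cmod (f x))\<^sup>2)"
  unfolding inner_on_def by (simp only: of_real_sum complex_norm_square)

lemma inner_on_self_eq_0D:
  assumes "finite X" "inner_on X f f = 0" "x \<in> X"
  shows "f x = 0"
proof -
  have "(\<Sum>x\<in>X. (cmod (f x))\<^sup>2) = 0"
    using assms(2) unfolding inner_on_self by (simp only: of_real_eq_0_iff)
  with assms(1,3) show ?thesis by (simp add: sum_nonneg_eq_0_iff)
qed

lemma inner_on_sum_left:
  "inner_on X (\<lambda>x. \<Sum>i\<in>I. c i * h i x) g = (\<Sum>i\<in>I. c i * inner_on X (h i) g)"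
  unfolding inner_on_def sum_distrib_right sum_distrib_left
  by (subst sum.swap) (simp add: mult.assoc)

lemma inner_on_sum_right:
  "inner_on X g (\<lambda>x. \<Sum>i\<in>I. c i * h i x) = (\<Sum>i\<in>I. cnj (c i) * inner_on X g (h i))"
  unfolding inner_on_def cnj_sum sum_distrib_left sum_distrib_right
  by (subst sum.swap) (simp add: algebra_simps)

lemma inner_on_add_left: "inner_on X (\<lambda>x. f x + g x) h = inner_on X f h + inner_on X g h"
  unfolding inner_on_def by (simp add: distrib_right sum.distrib)

lemma inner_on_scale_left: "inner_on X (\<lambda>x. c * f x) h = c * inner_on X f h"
  unfolding inner_on_def by (simp add: sum_distrib_left mult.assoc)

lemma inner_on_diff_left: "inner_on X (\<lambda>x. f x - g x) h = inner_on X f h - inner_on X g h"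
  unfolding inner_on_def by (simp add: algebra_simps sum_subtractf)

lemma inner_on_diff_right: "inner_on X h (\<lambda>x. f x - g x) = inner_on X h f - inner_on X h g"
  unfolding inner_on_def by (simp add: algebra_simps sum_subtractf)

lemma inner_on_divide:
  "inner_on X (\<lambda>x. f x / c) (\<lambda>x. g x / c) = inner_on X f g / (c * cnj c)"
  unfolding inner_on_def by (simp add: sum_divide_distrib)

lemma inner_on_delta_left:
  assumes "finite X" "y \<in> X"
  shows "inner_on X (\<lambda>x. if x = y then 1 else 0) g = cnj (g y)"
proof -
  have "inner_on X (\<lambda>x. if x = y then 1 else 0) g = (\<Sum>x\<in>X. if x = y then cnj (g y) else 0)"
    unfolding inner_on_def by (rule sum.cong) auto
  with assms show ?thesis by (simp add: sum.delta')
qed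

lemma inner_on_polarization:
  "4 * inner_on X f g =
     inner_on X (\<lambda>x. f x + g x) (\<lambda>x. f x + g x)
   - inner_on X (\<lambda>x. f x + (-1) * g x) (\<lambda>x. f x + (-1) * g x)
   + \<i> * inner_on X (\<lambda>x. f x + \<i> * g x) (\<lambda>x. f x + \<i> * g x)
   - \<i> * inner_on X (\<lambda>x. f x + (-\<i>) * g x) (\<lambda>x. f x + (-\<i>) * g x)"
  unfolding inner_on_def sum_distrib_left sum_subtractf[symmetric] sum.distrib[symmetric]
  by (rule sum.cong[OF refl]) (simp add: algebra_simps)

definition orthonormal_on :: "'a set \<Rightarrow> 'i set \<Rightarrow> ('i \<Rightarrow> 'a \<Rightarrow> complex) \<Rightarrow> bool" where
  "orthonormal_on X I b \<longleftrightarrow> (\<forall>i\<in>I. \<forall>j\<in>I. inner_on X (b i) (b j) = (if i = j then 1 else 0))"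

lemma orthonormal_on_inner_combination:
  assumes "orthonormal_on X I b" "finite I" "J \<subseteq> I" "j \<in> I"
  shows "inner_on X (\<lambda>x. \<Sum>i\<in>J. c i * b i x) (b j) = (if j \<in> J then c j else 0)"
proof -
  have "inner_on X (\<lambda>x. \<Sum>i\<in>J. c i * b i x) (b j) = (\<Sum>i\<in>J. if j = i then c i else 0)"
    unfolding inner_on_sum_left using assms by (intro sum.cong) (auto simp: orthonormal_on_def)
  also have "\<dots> = (if j \<in> J then c j else 0)"
    using assms finite_subset[of J I] by (simp add: sum.delta)
  finally show ?thesis .
qed

lemma bessel_residual:
  fixes f :: "'a \<Rightarrow> complex"
  assumes "orthonormal_on X I b" "finite I"
  defines "\<rho> \<equiv> \<lambda>x. f x - (\<Sum>i\<in>I. inner_on X f (b i) * b i x)"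
  shows bessel_residual_orthogonal: "j \<in> I \<Longrightarrow> inner_on X \<rho> (b j) = 0"
    and bessel_residual_norm:
      "inner_on X \<rho> \<rho> = inner_on X f f - of_real (\<Sum>i\<in>I. (cmod (inner_on X f (b i)))\<^sup>2)"
proof -
  show orth: "inner_on X \<rho> (b j) = 0" if "j \<in> I" for j
    unfolding \<rho>_def inner_on_diff_left
    using orthonormal_on_inner_combination[OF assms(1,2) order.refl that] that by simp
  have "inner_on X \<rho> (\<lambda>x. \<Sum>i\<in>I. inner_on X f (b i) * b i x) = 0"
    unfolding inner_on_sum_right by (simp add: orth)
  then have "inner_on X \<rho> \<rho> = inner_on X \<rho> f"
    by (simp add: \<rho>_def inner_on_diff_right)
  also have "\<dots> = inner_on X f f - (\<Sum>i\<in>I. inner_on X f (b i) * inner_on X (b i) f)"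
    unfolding \<rho>_def inner_on_diff_left inner_on_sum_left ..
  also have "(\<Sum>i\<in>I. inner_on X f (b i) * inner_on X (b i) f)
      = of_real (\<Sum>i\<in>I. (cmod (inner_on X f (b i)))\<^sup>2)"
    unfolding of_real_sum complex_norm_square by (simp add: inner_on_commute)
  finally show "inner_on X \<rho> \<rho> = inner_on X f f - of_real (\<Sum>i\<in>I. (cmod (inner_on X f (b i)))\<^sup>2)" .
qed

text \<open>\<open>proj_weight I b y\<close> is the squared norm of the orthogonal projection of the unit vector
  at \<open>y\<close> onto the span of \<open>b\<close>.\<close>

definition proj_weight :: "'i set \<Rightarrow> ('i \<Rightarrow> 'a \<Rightarrow> complex) \<Rightarrow> 'a \<Rightarrow> real" where
  "proj_weight I b y = (\<Sum>i\<in>I. (cmod (b i y))\<^sup>2)"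

lemma delta_residual:
  assumes X: "finite X" "y \<in> X" and b: "orthonormal_on X I b" "finite I"
  defines "\<rho> \<equiv> \<lambda>x. (if x = y then 1 else 0) - (\<Sum>i\<in>I. cnj (b i y) * b i x)"
  shows delta_residual_orthogonal: "j \<in> I \<Longrightarrow> inner_on X \<rho> (b j) = 0"
    and delta_residual_norm: "inner_on X \<rho> \<rho> = of_real (1 - proj_weight I b y)"
proof -
  have coeff: "inner_on X (\<lambda>x. if x = y then 1 else 0) (b i) = cnj (b i y)" for i
    by (rule inner_on_delta_left[OF X])
  show "inner_on X \<rho> (b j) = 0" if "j \<in> I"
    using bessel_residual_orthogonal[OF b that, where f = "\<lambda>x. if x = y then 1 else 0"]
    unfolding coeff \<rho>_def .
  show "inner_on X \<rho> \<rho> = of_real (1 - proj_weight I b y)"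
    using bessel_residual_norm[OF b, where f = "\<lambda>x. if x = y then 1 else 0"] X
    unfolding coeff \<rho>_def
    by (simp add: inner_on_delta_left proj_weight_def)
qed

lemma proj_weight_le_1:
  assumes "finite X" "y \<in> X" "orthonormal_on X I b" "finite I"
  shows "proj_weight I b y \<le> 1"
proof -
  let ?\<rho> = "\<lambda>x. (if x = y then 1 else 0) - (\<Sum>i\<in>I. cnj (b i y) * b i x)"
  have "(of_real (1 - proj_weight I b y) :: complex) = of_real (\<Sum>x\<in>X. (cmod (?\<rho> x))\<^sup>2)"
    using delta_residual_norm[OF assms] inner_on_self[of X ?\<rho>] by simp
  then have "1 - proj_weight I b y = (\<Sum>x\<in>X. (cmod (?\<rho> x))\<^sup>2)"
    by (simp only: of_real_eq_iff)
  also have "\<dots> \<ge> 0" by (simp add: sum_nonneg)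
  finally show ?thesis by simp
qed

lemma proj_weight_eq_1_imp_delta_expansion:
  assumes "finite X" "y \<in> X" "orthonormal_on X I b" "finite I"
    and "proj_weight I b y = 1" "z \<in> X"
  shows "(if z = y then 1 else 0) = (\<Sum>i\<in>I. cnj (b i y) * b i z)"
proof -
  let ?\<rho> = "\<lambda>x. (if x = y then 1 else 0) - (\<Sum>i\<in>I. cnj (b i y) * b i x)"
  have "inner_on X ?\<rho> ?\<rho> = 0"
    using delta_residual_norm[OF assms(1-4)] assms(5) by simp
  then have "?\<rho> z = 0" by (rule inner_on_self_eq_0D[OF assms(1) _ assms(6)])
  then show ?thesis by (simp only: right_minus_eq)
qed

lemma proj_weight_lt_1_imp_extend:
  assumes X: "finite X" "y \<in> X" and b: "orthonormal_on X I b" "finite I"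
    and lt: "proj_weight I b y < 1" and k: "k \<notin> I"
  shows "\<exists>v. orthonormal_on X (insert k I) (b(k := v))"
proof -
  define \<rho> where "\<rho> = (\<lambda>x. (if x = y then 1 else 0) - (\<Sum>i\<in>I. cnj (b i y) * b i x))"
  define N where "N = 1 - proj_weight I b y"
  have N: "N > 0" using lt by (simp add: N_def)
  define v where "v = (\<lambda>x. of_real (1 / sqrt N) * \<rho> x)"
  have "inner_on X v v = of_real (1 / sqrt N) * cnj (of_real (1 / sqrt N)) * inner_on X \<rho> \<rho>"
    unfolding v_def inner_on_def by (simp add: sum_distrib_left sum_divide_distrib algebra_simps)
  also have "\<dots> = of_real ((1 / sqrt N) * (1 / sqrt N) * N)"
    using delta_residual_norm[OF X b] by (simp del: of_real_mult add: of_real_mult[symmetric] \<rho>_def N_def)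
  also have "(1 / sqrt N) * (1 / sqrt N) * N = 1"
    using N by (simp add: field_simps)
  finally have vv: "inner_on X v v = 1" by simp
  have vb: "inner_on X v (b j) = 0" if "j \<in> I" for j
    using delta_residual_orthogonal[OF X b that] unfolding v_def inner_on_scale_left \<rho>_def
    by simp
  have bv: "inner_on X (b j) v = 0" if "j \<in> I" for j
    using vb[OF that] inner_on_commute[of X v "b j"] by simp
  show ?thesis
    using b k vv vb bv by (intro exI[of _ v]) (auto simp: orthonormal_on_def)
qed

lemma sum_proj_weight:
  assumes "orthonormal_on X I b" "finite I"
  shows "(\<Sum>y\<in>X. proj_weight I b y) = card I"
proof -
  have norm1: "(\<Sum>y\<in>X. (cmod (b i y))\<^sup>2) = 1" if "i \<in> I" for i
  proof -
    have "(of_real (\<Sum>y\<in>X. (cmod (b i y))\<^sup>2) :: complex) = 1"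
      using assms that unfolding inner_on_self[symmetric] by (simp add: orthonormal_on_def)
    then show ?thesis by (simp only: of_real_eq_1_iff)
  qed
  have "(\<Sum>y\<in>X. proj_weight I b y) = (\<Sum>i\<in>I. \<Sum>y\<in>X. (cmod (b i y))\<^sup>2)"
    unfolding proj_weight_def by (rule sum.swap)
  also have "\<dots> = card I" by (simp add: norm1)
  finally show ?thesis .
qed

lemma orthonormal_on_card_le:
  assumes "finite X" "orthonormal_on X I b" "finite I"
  shows "card I \<le> card X"
proof -
  have "real (card I) = (\<Sum>y\<in>X. proj_weight I b y)"
    using sum_proj_weight[OF assms(2,3)] by simp
  also have "\<dots> \<le> (\<Sum>y\<in>X. 1)"
    by (rule sum_mono) (rule proj_weight_le_1[OF assms(1) _ assms(2,3)])
  finally show ?thesis by simp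
qed

lemma orthonormal_on_expansion:
  assumes X: "finite X" and b: "orthonormal_on X I b" "finite I"
    and card: "card I = card X" and z: "z \<in> X"
  shows "f z = (\<Sum>i\<in>I. inner_on X f (b i) * b i z)"
proof -
  have "(\<Sum>y\<in>X. 1 - proj_weight I b y) = 0"
    using sum_proj_weight[OF b] card by (simp add: sum_subtractf)
  then have full: "proj_weight I b y = 1" if "y \<in> X" for y
    using X that proj_weight_le_1[OF X _ b] by (subst (asm) sum_nonneg_eq_0_iff) auto
  have "f z = (\<Sum>y\<in>X. f y * (if z = y then 1 else 0))"
    using X z by (simp add: if_distrib sum.delta cong: if_cong)
  also have "\<dots> = (\<Sum>y\<in>X. f y * (\<Sum>i\<in>I. cnj (b i y) * b i z))"
    using proj_weight_eq_1_imp_delta_expansion[OF X _ b full z] by (intro sum.cong) auto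
  also have "\<dots> = (\<Sum>y\<in>X. \<Sum>i\<in>I. f y * cnj (b i y) * b i z)"
    by (simp add: sum_distrib_left mult.assoc)
  also have "\<dots> = (\<Sum>i\<in>I. inner_on X f (b i) * b i z)"
    unfolding inner_on_def sum_distrib_right by (rule sum.swap)
  finally show ?thesis .
qed

lemma orthonormal_on_extend_to_basis:
  assumes X: "finite X" and b: "orthonormal_on X {..<k} b" and "k \<le> card X"
  shows "\<exists>b'. orthonormal_on X {..<card X} b' \<and> (\<forall>i<k. b' i = b i)"
  using b \<open>k \<le> card X\<close>
proof (induction "card X - k" arbitrary: k b)
  case 0
  then show ?case by auto
next
  case (Suc d)
  have "(\<Sum>y\<in>X. proj_weight {..<k} b y) < (\<Sum>y\<in>X. 1)"
    using sum_proj_weight[OF Suc.prems(1)] Suc.hyps(2) by simp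
  then obtain y where "y \<in> X" "proj_weight {..<k} b y < 1"
    by (meson not_less sum_mono)
  then obtain v where v: "orthonormal_on X {..<Suc k} (b(k := v))"
    using proj_weight_lt_1_imp_extend[OF X _ Suc.prems(1)] by (fastforce simp: lessThan_Suc)
  have "Suc k \<le> card X" "d = card X - Suc k" using Suc.hyps(2) by auto
  then obtain b' where "orthonormal_on X {..<card X} b'" "\<forall>i<Suc k. b' i = (b(k := v)) i"
    using Suc.hyps(1) v by blast
  then show ?case by (intro exI[of _ b']) auto
qed

definition supported_in :: "('a \<Rightarrow> complex) \<Rightarrow> 'a set \<Rightarrow> bool" where
  "supported_in f X \<longleftrightarrow> (\<forall>x. x \<notin> X \<longrightarrow> f x = 0)"

lemma supported_in_combination:
  "supported_in f X \<Longrightarrow> supported_in g X \<Longrightarrow> supported_in (\<lambda>x. f x + c * g x) X"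
  by (simp add: supported_in_def)

lemma card_le_if_isometric_on_supported:
  fixes U :: "('a \<Rightarrow> complex) \<Rightarrow> 'b \<Rightarrow> complex"
  assumes X: "finite X" and Y: "finite Y"
    and linear: "\<And>f g c. supported_in f X \<Longrightarrow> supported_in g X \<Longrightarrow>
                   U (\<lambda>x. f x + c * g x) = (\<lambda>y. U f y + c * U g y)"
    and isometric: "\<And>f. supported_in f X \<Longrightarrow> inner_on Y (U f) (U f) = inner_on X f f"
  shows "card X \<le> card Y"
proof -
  have inner_preserved: "inner_on Y (U f) (U g) = inner_on X f g"
    if f: "supported_in f X" and g: "supported_in g X" for f g
  proof -
    have "4 * inner_on Y (U f) (U g) = 4 * inner_on X f g"
      unfolding inner_on_polarization
      using isometric[OF supported_in_combination[OF f g, of 1]]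
        isometric[OF supported_in_combination[OF f g, of "-1"]]
        isometric[OF supported_in_combination[OF f g, of \<i>]]
        isometric[OF supported_in_combination[OF f g, of "-\<i>"]]
      unfolding linear[OF f g] by simp
    then show ?thesis by simp
  qed
  define e :: "'a \<Rightarrow> 'a \<Rightarrow> complex" where "e v = (\<lambda>x. if x = v then 1 else 0)" for v
  have e_supported: "supported_in (e v) X" if "v \<in> X" for v
    using that by (simp add: supported_in_def e_def)
  have "orthonormal_on Y X (\<lambda>v. U (e v))"
    unfolding orthonormal_on_def
    using inner_preserved[OF e_supported e_supported] inner_on_delta_left[OF X]
    by (auto simp: e_def)
  from orthonormal_on_card_le[OF Y this X] show ?thesis .
qed

section \<open>Square-summable functions\<close>

lemma mem_l2_iff: "f \<in> l2 V \<longleftrightarrow> supported_in f V \<and> (\<lambda>v. (cmod (f v))\<^sup>2) summable_on V"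
  by (simp add: l2_def supported_in_def)

lemma l2_add:
  assumes "f \<in> l2 V" "g \<in> l2 V"
  shows "(\<lambda>v. f v + g v) \<in> l2 V"
proof -
  have bound: "(cmod (x + y))\<^sup>2 \<le> 2 * (cmod x)\<^sup>2 + 2 * (cmod y)\<^sup>2" for x y :: complex
  proof -
    have "(cmod (x + y))\<^sup>2 \<le> (cmod x + cmod y)\<^sup>2"
      by (simp add: power_mono norm_triangle_ineq)
    also have "\<dots> \<le> 2 * (cmod x)\<^sup>2 + 2 * (cmod y)\<^sup>2"
      using zero_le_power2[of "cmod x - cmod y"] unfolding power2_diff power2_sum by linarith
    finally show ?thesis .
  qed
  have "(\<lambda>v. 2 * (cmod (f v))\<^sup>2 + 2 * (cmod (g v))\<^sup>2) summable_on V"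
    using assms by (intro summable_on_add summable_on_cmult_right) (auto simp: mem_l2_iff)
  then have "(\<lambda>v. (cmod (f v + g v))\<^sup>2) summable_on V"
    by (rule summable_on_comparison_test) (simp_all add: bound)
  with assms show ?thesis by (simp add: mem_l2_iff supported_in_def)
qed

lemma l2_scale:
  assumes "f \<in> l2 V"
  shows "(\<lambda>v. c * f v) \<in> l2 V"
proof -
  have "(\<lambda>v. (cmod c)\<^sup>2 * (cmod (f v))\<^sup>2) summable_on V"
    using assms by (intro summable_on_cmult_right) (simp add: mem_l2_iff)
  with assms show ?thesis
    by (simp add: mem_l2_iff supported_in_def norm_mult power_mult_distrib)
qed

lemma l2_norm_nonneg: "l2_norm V f \<ge> 0"
  by (simp add: l2_norm_def infsum_nonneg)

lemma unitarily_equivalent_sym: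
  assumes ue: "unitarily_equivalent V1 S1 V2 S2"
    and S1: "\<And>f. f \<in> l2 V1 \<Longrightarrow> S1 f \<in> l2 V1"
  shows "unitarily_equivalent V2 S2 V1 S1"
proof -
  obtain U where bij: "bij_betw U (l2 V1) (l2 V2)"
    and add: "\<forall>f\<in>l2 V1. \<forall>g\<in>l2 V1. U (\<lambda>v. f v + g v) = (\<lambda>w. U f w + U g w)"
    and scale: "\<forall>f\<in>l2 V1. \<forall>c. U (\<lambda>v. c * f v) = (\<lambda>w. c * U f w)"
    and norm: "\<forall>f\<in>l2 V1. l2_norm V2 (U f) = l2_norm V1 f"
    and intertwine: "\<forall>f\<in>l2 V1. U (S1 f) = S2 (U f)"
    using ue unfolding unitarily_equivalent_def by blast
  define U' where "U' = inv_into (l2 V1) U"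
  have bij': "bij_betw U' (l2 V2) (l2 V1)"
    unfolding U'_def by (rule bij_betw_inv_into[OF bij])
  have U'_l2: "g \<in> l2 V2 \<Longrightarrow> U' g \<in> l2 V1" for g
    using bij_betwE[OF bij'] by blast
  have U_U': "g \<in> l2 V2 \<Longrightarrow> U (U' g) = g" for g
    unfolding U'_def using bij by (simp add: bij_betw_def f_inv_into_f)
  have U'_U: "f \<in> l2 V1 \<Longrightarrow> U' (U f) = f" for f
    unfolding U'_def using bij by (simp add: bij_betw_def inv_into_f_f)
  have U'_eqI: "U' g = f" if "f \<in> l2 V1" "U f = g" for f g
    using U'_U that by blast
  show ?thesis
    unfolding unitarily_equivalent_def
  proof (intro exI[of _ U'] conjI ballI allI)
    fix f g assume f: "f \<in> l2 V2" and g: "g \<in> l2 V2"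
    show "U' (\<lambda>v. f v + g v) = (\<lambda>w. U' f w + U' g w)"
      by (rule U'_eqI) (use add U'_l2 U_U' f g l2_add[OF U'_l2[OF f] U'_l2[OF g]] in auto)
  next
    fix f c assume f: "f \<in> l2 V2"
    show "U' (\<lambda>v. c * f v) = (\<lambda>w. c * U' f w)"
      by (rule U'_eqI) (use scale U'_l2 U_U' f l2_scale[OF U'_l2[OF f]] in auto)
  next
    fix f assume f: "f \<in> l2 V2"
    show "l2_norm V1 (U' f) = l2_norm V2 f"
      using norm U'_l2[OF f] U_U'[OF f] by metis
    show "U' (S2 f) = S1 (U' f)"
      by (rule U'_eqI) (use intertwine U'_l2 U_U' f S1 in auto)
  qed (rule bij')
qed

lemma level_sums:
  fixes h :: "'a \<Rightarrow> real" and G :: "nat \<Rightarrow> 'a set"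
  assumes disj: "disjoint_family G" and cover: "(\<Union>n. G n) = V"
    and fin: "\<And>n. finite (G n)" and nonneg: "\<And>v. v \<in> V \<Longrightarrow> h v \<ge> 0"
  shows summable_on_iff_level_sums: "h summable_on V \<longleftrightarrow> summable (\<lambda>n. \<Sum>v\<in>G n. h v)"
    and infsum_eq_level_sums:
      "summable (\<lambda>n. \<Sum>v\<in>G n. h v) \<Longrightarrow> infsum h V = (\<Sum>n. \<Sum>v\<in>G n. h v)"
proof -
  let ?L = "\<lambda>n. \<Sum>v\<in>G n. h v"
  have level_nonneg: "h v \<ge> 0" if "v \<in> G n" for n v
    using nonneg cover that by blast
  have L_nonneg: "?L n \<ge> 0" for n
    using level_nonneg by (intro sum_nonneg)
  have "h summable_on (\<Union>n\<in>UNIV. G n) \<longleftrightarrow> ?L summable_on UNIV"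
    using disj fin level_nonneg
    by (intro summable_on_Union_iff) (auto simp: disjoint_family_on_def)
  also have "\<dots> \<longleftrightarrow> summable ?L"
    by (rule summable_on_UNIV_nonneg_real_iff) (rule L_nonneg)
  finally show summable_iff: "h summable_on V \<longleftrightarrow> summable ?L"
    using cover by simp
  assume "summable ?L"
  have inj: "inj_on snd (Sigma UNIV G)"
    using disj by (auto simp: inj_on_def disjoint_family_on_def)
  have image: "snd ` Sigma UNIV G = V"
    using cover by force
  have "(h \<circ> snd) summable_on Sigma UNIV G"
    using summable_on_reindex[OF inj, of h] summable_iff \<open>summable ?L\<close> image by simp
  then have "infsum (\<lambda>n. infsum (\<lambda>v. (h \<circ> snd) (n, v)) (G n)) UNIV = infsum (h \<circ> snd) (Sigma UNIV G)"
    by (rule infsum_Sigma_banach)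
  also have "\<dots> = infsum h V"
    using infsum_reindex[OF inj, of h] image by simp
  also have "(\<lambda>n. infsum (\<lambda>v. (h \<circ> snd) (n, v)) (G n)) = ?L"
    using fin by simp
  finally have "infsum ?L UNIV = infsum h V" .
  moreover have "?L sums infsum ?L UNIV"
    using summable_nonneg_imp_summable_on[OF \<open>summable ?L\<close> L_nonneg]
    by (intro has_sum_imp_sums has_sum_infsum)
  ultimately show "infsum h V = suminf ?L"
    by (simp add: sums_iff)
qed

section \<open>Generations of a rooted tree\<close>

locale dirichlet_tree =
  fixes V :: "'a set" and E :: "('a \<times> 'a) set" and r :: 'a and q :: real
  assumes rooted: "rooted_tree V E r" and leafless: "leafless V E"
    and locally_finite: "locally_finite V E" and q_gt_1: "q > 1"
begin

definition gen :: "nat \<Rightarrow> 'a set" where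
  "gen n = Chi_pow E n {r}"

abbreviation shift :: "('a \<Rightarrow> complex) \<Rightarrow> 'a \<Rightarrow> complex" where
  "shift \<equiv> dirichlet_shift V E r q"

text \<open>\<open>gain n\<close> is the squared norm of \<open>shift\<close> applied to a unit vector at a vertex of depth \<open>n\<close>.\<close>

definition gain :: "nat \<Rightarrow> real" where
  "gain n = (real n + q) / (real n + 1)"

lemma edge_in_V: "(x, y) \<in> E \<Longrightarrow> x \<in> V \<and> y \<in> V"
  using rooted unfolding rooted_tree_def by auto

lemma root_in_V: "r \<in> V"
  using rooted unfolding rooted_tree_def by auto

lemma no_edge_to_root: "(v, r) \<notin> E"
  using rooted unfolding rooted_tree_def by auto

lemma parent_unique: "(p, u) \<in> E \<Longrightarrow> (p', u) \<in> E \<Longrightarrow> p = p'"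
proof -
  assume pu: "(p, u) \<in> E" and p'u: "(p', u) \<in> E"
  then have "u \<in> V - {r}" using edge_in_V no_edge_to_root by fastforce
  then have "\<exists>!v. (v, u) \<in> E" using rooted unfolding rooted_tree_def by blast
  with pu p'u show ?thesis by blast
qed

lemma finite_Chi: "v \<in> V \<Longrightarrow> finite (Chi E v)"
  using locally_finite unfolding locally_finite_def by blast

lemma card_Chi_pos: "v \<in> V \<Longrightarrow> card (Chi E v) \<ge> 1"
  using leafless finite_Chi unfolding leafless_def by (auto simp: Suc_le_eq card_gt_0_iff)

lemma Chi_disjoint: "p \<noteq> p' \<Longrightarrow> Chi E p \<inter> Chi E p' = {}"
  using parent_unique by (auto simp: Chi_def)

lemma gen_0 [simp]: "gen 0 = {r}"
  by (simp add: gen_def)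

lemma gen_Suc: "gen (Suc n) = (\<Union>p\<in>gen n. Chi E p)"
  by (simp add: gen_def)

lemma mem_gen_Suc_iff: "u \<in> gen (Suc n) \<longleftrightarrow> (\<exists>p\<in>gen n. (p, u) \<in> E)"
  by (simp add: gen_Suc Chi_def)

lemma gen_subset_V: "gen n \<subseteq> V"
  by (induction n) (use root_in_V edge_in_V in \<open>auto simp: mem_gen_Suc_iff\<close>)

lemma finite_gen: "finite (gen n)"
  by (induction n) (use finite_Chi gen_subset_V in \<open>auto simp: gen_Suc\<close>)

lemma mem_gen_unique: "v \<in> gen n \<Longrightarrow> v \<in> gen m \<Longrightarrow> n = m"
proof (induction n arbitrary: v m)
  case 0
  then show ?case using no_edge_to_root by (cases m) (auto simp: mem_gen_Suc_iff)
next
  case (Suc n)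
  then obtain p where p: "p \<in> gen n" "(p, v) \<in> E" by (auto simp: mem_gen_Suc_iff)
  show ?case
  proof (cases m)
    case 0
    then show ?thesis using Suc.prems p no_edge_to_root by auto
  next
    case (Suc m')
    then obtain p' where p': "p' \<in> gen m'" "(p', v) \<in> E"
      using Suc.prems by (auto simp: mem_gen_Suc_iff)
    have "p = p'" using parent_unique p p' by blast
    then show ?thesis using Suc.IH p p' Suc by blast
  qed
qed

lemma disjoint_family_gen: "disjoint_family gen"
  using mem_gen_unique by (auto simp: disjoint_family_on_def)

lemma reachable_from_root: "v \<in> V \<Longrightarrow> (r, v) \<in> E\<^sup>*"
  using rooted unfolding rooted_tree_def by blast

lemma Union_gen: "(\<Union>n. gen n) = V"
proof -
  have "\<exists>n. v \<in> gen n" if "v \<in> V" for v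
    using reachable_from_root[OF that]
  proof (induction rule: rtrancl_induct)
    case base
    then show ?case by (auto intro: exI[of _ 0])
  next
    case (step y z)
    then obtain n where "y \<in> gen n" by blast
    with step(2) have "z \<in> gen (Suc n)" by (auto simp: mem_gen_Suc_iff)
    then show ?case by blast
  qed
  then show ?thesis
    using gen_subset_V by blast
qed

lemma depth_eq: "v \<in> gen n \<Longrightarrow> depth E r v = n"
  unfolding depth_def gen_def[symmetric] using mem_gen_unique by blast

lemma sum_gen_Suc: "(\<Sum>u\<in>gen (Suc n). F u) = (\<Sum>p\<in>gen n. \<Sum>u\<in>Chi E p. F u)"
  unfolding gen_Suc
  by (rule sum.UNION_disjoint) (use finite_gen finite_Chi gen_subset_V Chi_disjoint in auto)

lemma card_gen_Suc: "card (gen (Suc n)) = (\<Sum>p\<in>gen n. card (Chi E p))"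
  unfolding gen_Suc
  by (rule card_UN_disjoint) (use finite_gen finite_Chi gen_subset_V Chi_disjoint in auto)

lemma card_gen_le_Suc: "card (gen n) \<le> card (gen (Suc n))"
proof -
  have "card (gen n) = (\<Sum>p\<in>gen n. 1)" by simp
  also have "\<dots> \<le> (\<Sum>p\<in>gen n. card (Chi E p))"
    by (rule sum_mono) (use card_Chi_pos gen_subset_V in blast)
  finally show ?thesis by (simp add: card_gen_Suc)
qed

lemma branching_sum_eq:
  "(\<Sum>v\<in>branching V E \<inter> gen n. card (Chi E v) - 1) = card (gen (Suc n)) - card (gen n)"
proof -
  have "(\<Sum>v\<in>branching V E \<inter> gen n. card (Chi E v) - 1) = (\<Sum>v\<in>gen n. card (Chi E v) - 1)"
    by (rule sum.mono_neutral_left) (use finite_gen gen_subset_V in \<open>auto simp: branching_def\<close>)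
  also have "\<dots> = (\<Sum>v\<in>gen n. card (Chi E v)) - (\<Sum>v\<in>gen n. 1)"
    using card_Chi_pos gen_subset_V by (intro sum_subtractf_nat) blast
  finally show ?thesis by (simp add: card_gen_Suc)
qed

lemma shift_child: "(p, u) \<in> E \<Longrightarrow> shift f u = of_real (dirichlet_weight E r q p u) * f p"
proof -
  assume pu: "(p, u) \<in> E"
  then have "{v \<in> V. (v, u) \<in> E} = {p}" using parent_unique edge_in_V by blast
  with pu edge_in_V show ?thesis by (simp add: dirichlet_shift_def)
qed

lemma shift_root: "shift f r = 0"
  using no_edge_to_root by (simp add: dirichlet_shift_def)

lemma shift_outside: "u \<notin> V \<Longrightarrow> shift f u = 0"
  by (simp add: dirichlet_shift_def)

lemma gain_pos: "gain n > 0"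
  using q_gt_1 by (simp add: gain_def)

lemma gain_le: "gain n \<le> q"
proof -
  have "real n \<le> q * real n" using mult_right_mono[of 1 q "real n"] q_gt_1 by simp
  then show ?thesis by (simp add: gain_def divide_le_eq algebra_simps)
qed

lemma gain_inj: "gain n = gain m \<Longrightarrow> n = m"
proof -
  assume "gain n = gain m"
  then have "(real n + q) * (real m + 1) = (real m + q) * (real n + 1)"
    by (simp add: gain_def field_simps)
  then have "(q - 1) * (real n - real m) = 0" by (simp add: algebra_simps)
  with q_gt_1 show "n = m" by simp
qed

lemma sum_sq_weight_children:
  assumes "p \<in> gen n"
  shows "(\<Sum>u\<in>Chi E p. (dirichlet_weight E r q p u)\<^sup>2) = gain n"
proof -
  have "card (Chi E p) \<ge> 1" using assms card_Chi_pos gen_subset_V by blast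
  moreover have "(real n + q) / (real n + 1) \<ge> 0" using q_gt_1 by simp
  ultimately show ?thesis
    by (simp add: dirichlet_weight_def depth_eq[OF assms] gain_def power_mult_distrib power_divide)
qed

lemma inner_on_shift:
  "inner_on (gen (Suc n)) (shift f) (shift g) = gain n * inner_on (gen n) f g"
proof -
  have "(\<Sum>u\<in>Chi E p. shift f u * cnj (shift g u)) = gain n * (f p * cnj (g p))"
    if p: "p \<in> gen n" for p
  proof -
    have "(\<Sum>u\<in>Chi E p. shift f u * cnj (shift g u))
        = (\<Sum>u\<in>Chi E p. of_real ((dirichlet_weight E r q p u)\<^sup>2) * (f p * cnj (g p)))"
    proof (rule sum.cong[OF refl])
      fix u assume "u \<in> Chi E p"
      then have pu: "(p, u) \<in> E" by (simp add: Chi_def)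
      show "shift f u * cnj (shift g u) = of_real ((dirichlet_weight E r q p u)\<^sup>2) * (f p * cnj (g p))"
        by (simp add: shift_child[OF pu] power2_eq_square)
    qed
    also have "\<dots> = of_real (\<Sum>u\<in>Chi E p. (dirichlet_weight E r q p u)\<^sup>2) * (f p * cnj (g p))"
      by (simp only: of_real_sum sum_distrib_right)
    finally show ?thesis by (simp add: sum_sq_weight_children[OF p])
  qed
  then show ?thesis
    unfolding inner_on_def sum_gen_Suc sum_distrib_left by (rule sum.cong[OF refl])
qed

definition level_norm2 :: "('a \<Rightarrow> complex) \<Rightarrow> nat \<Rightarrow> real" where
  "level_norm2 f n = (\<Sum>v\<in>gen n. (cmod (f v))\<^sup>2)"

lemma level_norm2_nonneg: "level_norm2 f n \<ge> 0"
  unfolding level_norm2_def by (simp add: sum_nonneg)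

lemma inner_on_gen_self: "inner_on (gen n) f f = of_real (level_norm2 f n)"
  unfolding level_norm2_def by (rule inner_on_self)

lemma level_norm2_eq_0_iff: "level_norm2 f n = 0 \<longleftrightarrow> (\<forall>v\<in>gen n. f v = 0)"
  unfolding level_norm2_def using finite_gen by (subst sum_nonneg_eq_0_iff) auto

lemma mem_l2_iff_levels: "f \<in> l2 V \<longleftrightarrow> supported_in f V \<and> summable (level_norm2 f)"
  unfolding mem_l2_iff level_norm2_def
  by (subst summable_on_iff_level_sums[OF disjoint_family_gen Union_gen finite_gen]) auto

lemma l2_norm_sq_eq_levels:
  assumes "summable (level_norm2 f)"
  shows "(l2_norm V f)\<^sup>2 = (\<Sum>n. level_norm2 f n)"
proof -
  have "infsum (\<lambda>v. (cmod (f v))\<^sup>2) V = (\<Sum>n. level_norm2 f n)"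
    using assms unfolding level_norm2_def
    by (subst infsum_eq_level_sums[OF disjoint_family_gen Union_gen finite_gen]) auto
  moreover have "(\<Sum>n. level_norm2 f n) \<ge> 0"
    using assms level_norm2_nonneg by (rule suminf_nonneg)
  ultimately show ?thesis by (simp add: l2_norm_def)
qed

lemma level_norm2_shift_0: "level_norm2 (shift f) 0 = 0"
  by (simp add: level_norm2_def shift_root)

lemma level_norm2_shift_Suc: "level_norm2 (shift f) (Suc n) = gain n * level_norm2 f n"
  using inner_on_shift[of n f f] unfolding inner_on_gen_self of_real_mult[symmetric] of_real_eq_iff .

lemma summable_scaled_level_norm2:
  assumes "summable (level_norm2 f)" and "\<And>n. \<bar>c n\<bar> \<le> q"
  shows "summable (\<lambda>n. c n * level_norm2 f n)"
proof (rule summable_comparison_test[OF _ summable_mult[OF assms(1), of q]])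
  have "\<bar>c n\<bar> * level_norm2 f n \<le> q * level_norm2 f n" for n
    using assms(2) level_norm2_nonneg by (rule mult_right_mono)
  then show "\<exists>N. \<forall>n\<ge>N. norm (c n * level_norm2 f n) \<le> q * level_norm2 f n"
    using level_norm2_nonneg by (simp add: abs_mult)
qed

lemma shift_l2: "f \<in> l2 V \<Longrightarrow> shift f \<in> l2 V"
proof -
  assume "f \<in> l2 V"
  then have "summable (\<lambda>n. gain n * level_norm2 f n)"
    using gain_pos[THEN less_imp_le] gain_le
    by (intro summable_scaled_level_norm2) (auto simp: mem_l2_iff_levels)
  then have "summable (\<lambda>n. level_norm2 (shift f) (Suc n))"
    by (simp only: level_norm2_shift_Suc)
  then have "summable (level_norm2 (shift f))"
    by (rule summable_Suc_iff[THEN iffD1])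
  then show ?thesis
    by (simp add: mem_l2_iff_levels supported_in_def shift_outside)
qed

lemma level_norm2_if_supported_in_gen:
  "supported_in h (gen n) \<Longrightarrow> level_norm2 h m = (if m = n then level_norm2 h n else 0)"
  using disjoint_family_gen
  by (auto simp: level_norm2_eq_0_iff supported_in_def disjoint_family_on_def)

lemma supported_in_gen_l2:
  assumes "supported_in h (gen n)"
  shows "h \<in> l2 V" and "(l2_norm V h)\<^sup>2 = level_norm2 h n"
proof -
  have levels: "level_norm2 h = (\<lambda>m. if m = n then level_norm2 h n else 0)"
    using level_norm2_if_supported_in_gen[OF assms] by blast
  have "summable (level_norm2 h)" by (subst levels) (rule summable_single)
  moreover have "supported_in h V"
    using assms gen_subset_V by (auto simp: supported_in_def)
  ultimately show "h \<in> l2 V" by (simp add: mem_l2_iff_levels)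
  show "(l2_norm V h)\<^sup>2 = level_norm2 h n"
    unfolding l2_norm_sq_eq_levels[OF \<open>summable (level_norm2 h)\<close>]
    by (subst levels) (rule sums_unique[symmetric], rule sums_single)
qed

section \<open>Bases adapted to the Dirichlet shift\<close>

definition shifted_basis :: "nat \<Rightarrow> (nat \<Rightarrow> 'a \<Rightarrow> complex) \<Rightarrow> nat \<Rightarrow> 'a \<Rightarrow> complex" where
  "shifted_basis n b i = (\<lambda>u. shift (b i) u / of_real (sqrt (gain n)))"

lemma orthonormal_shifted_basis:
  assumes "orthonormal_on (gen n) {..<card (gen n)} b"
  shows "orthonormal_on (gen (Suc n)) {..<card (gen n)} (shifted_basis n b)"
proof -
  have "of_real (sqrt (gain n)) * cnj (of_real (sqrt (gain n))) = (of_real (gain n) :: complex)"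
    using gain_pos[of n] by (simp del: of_real_mult add: of_real_mult[symmetric])
  with assms gain_pos[of n] show ?thesis
    unfolding orthonormal_on_def shifted_basis_def inner_on_divide inner_on_shift by simp
qed

lemma extend_shifted_basis:
  assumes "orthonormal_on (gen n) {..<card (gen n)} b"
  shows "\<exists>b'. orthonormal_on (gen (Suc n)) {..<card (gen (Suc n))} b' \<and>
              (\<forall>i<card (gen n). b' i = shifted_basis n b i)"
  by (rule orthonormal_on_extend_to_basis[OF finite_gen orthonormal_shifted_basis[OF assms]])
     (rule card_gen_le_Suc)

primrec basis :: "nat \<Rightarrow> nat \<Rightarrow> 'a \<Rightarrow> complex" where
  "basis 0 = (\<lambda>i u. if u = r then 1 else 0)"
| "basis (Suc n) = (SOME b. orthonormal_on (gen (Suc n)) {..<card (gen (Suc n))} b \<and>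
                           (\<forall>i<card (gen n). b i = shifted_basis n (basis n) i))"

declare basis.simps(2) [simp del]

lemma orthonormal_basis: "orthonormal_on (gen n) {..<card (gen n)} (basis n)"
proof (induction n)
  case 0
  show ?case by (simp add: orthonormal_on_def inner_on_def)
next
  case (Suc n)
  from someI_ex[OF extend_shifted_basis[OF Suc]] show ?case by (simp add: basis.simps(2))
qed

lemma basis_Suc: "i < card (gen n) \<Longrightarrow> basis (Suc n) i = shifted_basis n (basis n) i"
  using someI_ex[OF extend_shifted_basis[OF orthonormal_basis[of n]]] by (simp add: basis.simps(2))

lemma shift_basis:
  assumes "(p, u) \<in> E" "p \<in> gen n" "i < card (gen n)"
  shows "of_real (dirichlet_weight E r q p u) * basis n i p = of_real (sqrt (gain n)) * basis (Suc n) i u"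
proof -
  have "basis (Suc n) i u = of_real (dirichlet_weight E r q p u) * basis n i p / of_real (sqrt (gain n))"
    using assms by (simp add: basis_Suc shifted_basis_def shift_child)
  then show ?thesis using gain_pos[of n] by simp
qed

definition coeff :: "('a \<Rightarrow> complex) \<Rightarrow> nat \<Rightarrow> nat \<Rightarrow> complex" where
  "coeff f n i = inner_on (gen n) f (basis n i)"

lemma basis_expansion: "v \<in> gen n \<Longrightarrow> f v = (\<Sum>i<card (gen n). coeff f n i * basis n i v)"
  unfolding coeff_def by (rule orthonormal_on_expansion[OF finite_gen orthonormal_basis]) auto

lemma level_norm2_eq_coeff: "level_norm2 f n = (\<Sum>i<card (gen n). (cmod (coeff f n i))\<^sup>2)"
proof -
  have "inner_on (gen n) f f = inner_on (gen n) (\<lambda>v. \<Sum>i<card (gen n). coeff f n i * basis n i v) f"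
    by (rule inner_on_cong) (use basis_expansion in auto)
  also have "\<dots> = (\<Sum>i<card (gen n). coeff f n i * cnj (coeff f n i))"
    unfolding inner_on_sum_left coeff_def by (simp add: inner_on_commute)
  also have "\<dots> = of_real (\<Sum>i<card (gen n). (cmod (coeff f n i))\<^sup>2)"
    unfolding of_real_sum complex_norm_square ..
  finally show ?thesis
    unfolding inner_on_gen_self of_real_eq_iff .
qed

lemma coeff_add: "coeff (\<lambda>v. f v + g v) = (\<lambda>n i. coeff f n i + coeff g n i)"
  unfolding coeff_def by (simp add: inner_on_add_left)

lemma coeff_scale: "coeff (\<lambda>v. c * f v) = (\<lambda>n i. c * coeff f n i)"
  unfolding coeff_def by (simp add: inner_on_scale_left)

definition shift_coeff :: "(nat \<Rightarrow> nat \<Rightarrow> complex) \<Rightarrow> nat \<Rightarrow> nat \<Rightarrow> complex" where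
  "shift_coeff c n i = (case n of 0 \<Rightarrow> 0
     | Suc m \<Rightarrow> if i < card (gen m) then of_real (sqrt (gain m)) * c m i else 0)"

lemma coeff_shift:
  assumes j: "j < card (gen n)"
  shows "coeff (shift f) n j = shift_coeff (coeff f) n j"
proof (cases n)
  case 0
  then show ?thesis by (simp add: coeff_def inner_on_def shift_coeff_def shift_root)
next
  case (Suc m)
  have "inner_on (gen (Suc m)) (shift f) (basis (Suc m) j) =
        inner_on (gen (Suc m)) (\<lambda>u. \<Sum>i\<in>{..<card (gen m)}. (of_real (sqrt (gain m)) * coeff f m i) * basis (Suc m) i u)
          (basis (Suc m) j)"
  proof (rule inner_on_cong)
    fix u assume "u \<in> gen (Suc m)"
    then obtain p where p: "p \<in> gen m" "(p, u) \<in> E" by (auto simp: mem_gen_Suc_iff)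
    have "shift f u = (\<Sum>i<card (gen m). coeff f m i * (of_real (dirichlet_weight E r q p u) * basis m i p))"
      unfolding shift_child[OF p(2)] basis_expansion[OF p(1), of f] sum_distrib_left
      by (simp add: algebra_simps)
    also have "\<dots> = (\<Sum>i<card (gen m). (of_real (sqrt (gain m)) * coeff f m i) * basis (Suc m) i u)"
      using shift_basis[OF p(2,1)] by (simp add: algebra_simps)
    finally show "shift f u = (\<Sum>i\<in>{..<card (gen m)}. (of_real (sqrt (gain m)) * coeff f m i) * basis (Suc m) i u)" .
  qed simp
  also have "\<dots> = shift_coeff (coeff f) n j"
  proof -
    have "{..<card (gen m)} \<subseteq> {..<card (gen (Suc m))}" using card_gen_le_Suc[of m] by auto
    with j show ?thesis
      by (subst orthonormal_on_inner_combination[OF orthonormal_basis]) (auto simp: Suc shift_coeff_def)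
  qed
  finally show ?thesis by (simp add: coeff_def Suc)
qed

definition from_coeffs :: "(nat \<Rightarrow> nat \<Rightarrow> complex) \<Rightarrow> 'a \<Rightarrow> complex" where
  "from_coeffs c v = (if v \<in> V then
     (\<Sum>i<card (gen (depth E r v)). c (depth E r v) i * basis (depth E r v) i v) else 0)"

lemma from_coeffs_gen: "v \<in> gen n \<Longrightarrow> from_coeffs c v = (\<Sum>i<card (gen n). c n i * basis n i v)"
  using gen_subset_V depth_eq by (auto simp: from_coeffs_def)

lemma supported_from_coeffs: "supported_in (from_coeffs c) V"
  by (simp add: supported_in_def from_coeffs_def)

lemma from_coeffs_cong:
  "(\<And>n i. i < card (gen n) \<Longrightarrow> c n i = d n i) \<Longrightarrow> from_coeffs c = from_coeffs d"
  unfolding from_coeffs_def by (intro ext if_cong refl sum.cong) auto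

lemma from_coeffs_add: "from_coeffs (\<lambda>n i. c n i + d n i) = (\<lambda>v. from_coeffs c v + from_coeffs d v)"
  by (auto simp: from_coeffs_def distrib_right sum.distrib)

lemma from_coeffs_scale: "from_coeffs (\<lambda>n i. k * c n i) = (\<lambda>v. k * from_coeffs c v)"
  by (auto simp: from_coeffs_def sum_distrib_left mult.assoc)

lemma coeff_from_coeffs:
  assumes "j < card (gen n)"
  shows "coeff (from_coeffs c) n j = c n j"
proof -
  have "coeff (from_coeffs c) n j = inner_on (gen n) (\<lambda>v. \<Sum>i\<in>{..<card (gen n)}. c n i * basis n i v) (basis n j)"
    unfolding coeff_def by (rule inner_on_cong) (auto simp: from_coeffs_gen)
  also have "\<dots> = c n j"
    using assms by (subst orthonormal_on_inner_combination[OF orthonormal_basis]) auto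
  finally show ?thesis .
qed

lemma from_coeffs_coeff:
  assumes "supported_in f V"
  shows "from_coeffs (coeff f) = f"
proof
  fix v
  show "from_coeffs (coeff f) v = f v"
  proof (cases "v \<in> V")
    case True
    then obtain n where n: "v \<in> gen n" using Union_gen by blast
    show ?thesis by (simp only: from_coeffs_gen[OF n] basis_expansion[OF n, symmetric])
  next
    case False
    with assms show ?thesis by (simp add: from_coeffs_def supported_in_def)
  qed
qed

lemma level_norm2_from_coeffs: "level_norm2 (from_coeffs c) n = (\<Sum>i<card (gen n). (cmod (c n i))\<^sup>2)"
  unfolding level_norm2_eq_coeff by (rule sum.cong) (auto simp: coeff_from_coeffs)

lemma shift_coeff_cong:
  "(\<And>n i. i < card (gen n) \<Longrightarrow> c n i = d n i) \<Longrightarrow> shift_coeff c = shift_coeff d"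
  by (intro ext) (simp add: shift_coeff_def split: nat.split)

lemma shift_from_coeffs: "shift (from_coeffs c) = from_coeffs (shift_coeff c)"
proof -
  have "supported_in (shift (from_coeffs c)) V"
    by (simp add: supported_in_def shift_outside)
  then have "shift (from_coeffs c) = from_coeffs (coeff (shift (from_coeffs c)))"
    by (simp add: from_coeffs_coeff)
  also have "\<dots> = from_coeffs (shift_coeff (coeff (from_coeffs c)))"
    by (rule from_coeffs_cong) (rule coeff_shift)
  also have "shift_coeff (coeff (from_coeffs c)) = shift_coeff c"
    by (rule shift_coeff_cong) (rule coeff_from_coeffs)
  finally show ?thesis .
qed

section \<open>A quadratic form detecting the generations\<close>

definition defect :: "nat \<Rightarrow> ('a \<Rightarrow> complex) \<Rightarrow> real" where
  "defect n h = (\<Sum>m. (gain m - gain n) * level_norm2 h m)"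

lemma defect_sums:
  assumes "h \<in> l2 V"
  shows "(\<lambda>m. (gain m - gain n) * level_norm2 h m) sums defect n h"
proof -
  have "\<bar>gain m - gain n\<bar> \<le> q" for m
    using gain_pos[of m] gain_pos[of n] gain_le[of m] gain_le[of n] by linarith
  with assms show ?thesis
    unfolding defect_def
    by (intro summable_sums summable_scaled_level_norm2) (auto simp: mem_l2_iff_levels)
qed

lemma defect_eq_norms:
  assumes h: "h \<in> l2 V"
  shows "defect n h = (l2_norm V (shift h))\<^sup>2 - gain n * (l2_norm V h)\<^sup>2"
proof -
  have sum_h: "summable (level_norm2 h)" and sum_shift: "summable (level_norm2 (shift h))"
    using h shift_l2[OF h] by (auto simp: mem_l2_iff_levels)
  have "(\<lambda>m. level_norm2 (shift h) (Suc m)) sums (l2_norm V (shift h))\<^sup>2"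
    using sums_split_initial_segment[OF summable_sums[OF sum_shift], of 1]
    by (simp add: l2_norm_sq_eq_levels[OF sum_shift] level_norm2_shift_0)
  then have "(\<lambda>m. gain m * level_norm2 h m) sums (l2_norm V (shift h))\<^sup>2"
    by (simp add: level_norm2_shift_Suc)
  moreover have "(\<lambda>m. gain n * level_norm2 h m) sums (gain n * (l2_norm V h)\<^sup>2)"
    using sums_mult[OF summable_sums[OF sum_h]] by (simp add: l2_norm_sq_eq_levels[OF sum_h])
  ultimately have "(\<lambda>m. (gain m - gain n) * level_norm2 h m)
      sums ((l2_norm V (shift h))\<^sup>2 - gain n * (l2_norm V h)\<^sup>2)"
    by (simp add: left_diff_distrib sums_diff)
  with defect_sums[OF h] show ?thesis by (rule sums_unique2)
qed

lemma defect_supported_in_gen: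
  assumes "supported_in h (gen m)"
  shows "defect n h = (gain m - gain n) * level_norm2 h m"
proof -
  have "(\<lambda>j. (gain j - gain n) * level_norm2 h j) = (\<lambda>j. if j = m then (gain m - gain n) * level_norm2 h m else 0)"
    by (subst level_norm2_if_supported_in_gen[OF assms]) auto
  then show ?thesis
    unfolding defect_def by (simp add: sums_unique[OF sums_single, symmetric])
qed

lemma defect_add_supported_in_gen:
  assumes supp: "supported_in f (gen n)"
  shows "defect n (\<lambda>v. f v + g v) = defect n g"
proof -
  have level_eq: "level_norm2 (\<lambda>v. f v + g v) m = level_norm2 g m" if "m \<noteq> n" for m
  proof -
    have "f v = 0" if "v \<in> gen m" for v
      using supp disjoint_family_gen \<open>m \<noteq> n\<close> that
      by (auto simp: supported_in_def disjoint_family_on_def)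
    then show ?thesis unfolding level_norm2_def by (intro sum.cong) auto
  qed
  have "(\<lambda>m. (gain m - gain n) * level_norm2 (\<lambda>v. f v + g v) m) = (\<lambda>m. (gain m - gain n) * level_norm2 g m)"
  proof
    fix m
    show "(gain m - gain n) * level_norm2 (\<lambda>v. f v + g v) m = (gain m - gain n) * level_norm2 g m"
      by (cases "m = n") (simp_all add: level_eq)
  qed
  then show ?thesis unfolding defect_def by simp
qed

text \<open>Adding to \<open>f\<close> its own restriction to generation \<open>m\<close> raises the defect by three times the
  defect of that restriction, so the latter vanishes; as \<open>q > 1\<close> makes \<open>gain\<close> injective, \<open>f\<close>
  vanishes on generation \<open>m\<close>.\<close>

lemma defect_invariant_imp_vanishes_on_gen:
  assumes f: "f \<in> l2 V" and invariant: "\<forall>g\<in>l2 V. defect n (\<lambda>v. f v + g v) = defect n g"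
    and "m \<noteq> n"
  shows "\<forall>v\<in>gen m. f v = 0"
proof -
  have "(\<lambda>v. 0) \<in> l2 V"
    by (simp add: mem_l2_iff supported_in_def)
  with invariant have defect_f: "defect n f = 0"
    by (force simp: defect_def level_norm2_def)
  define f\<^sub>m where "f\<^sub>m v = (if v \<in> gen m then f v else 0)" for v
  have supp_m: "supported_in f\<^sub>m (gen m)"
    by (simp add: supported_in_def f\<^sub>m_def)
  define D where "D = (gain m - gain n) * level_norm2 f m"
  have "level_norm2 f\<^sub>m m = level_norm2 f m"
    unfolding level_norm2_def f\<^sub>m_def by (rule sum.cong) auto
  then have defect_m: "defect n f\<^sub>m = D"
    by (simp add: defect_supported_in_gen[OF supp_m] D_def)
  have "level_norm2 (\<lambda>v. f v + f\<^sub>m v) j = level_norm2 f j + (if j = m then 3 * level_norm2 f m else 0)"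
    for j
  proof (cases "j = m")
    case True
    have "level_norm2 (\<lambda>v. f v + f\<^sub>m v) m = (\<Sum>v\<in>gen m. 4 * (cmod (f v))\<^sup>2)"
      unfolding level_norm2_def f\<^sub>m_def by (rule sum.cong) (auto simp: norm_mult power_mult_distrib)
    with True show ?thesis by (simp add: level_norm2_def sum_distrib_left[symmetric])
  next
    case False
    then have "gen j \<inter> gen m = {}"
      using disjoint_family_gen by (auto simp: disjoint_family_on_def)
    with False show ?thesis
      unfolding level_norm2_def f\<^sub>m_def by (auto intro!: sum.cong)
  qed
  then have "(\<lambda>j. (gain j - gain n) * level_norm2 (\<lambda>v. f v + f\<^sub>m v) j)
      = (\<lambda>j. (gain j - gain n) * level_norm2 f j + (if j = m then 3 * D else 0))"
    by (auto simp: D_def algebra_simps)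
  moreover have "(\<lambda>j. (gain j - gain n) * level_norm2 f j + (if j = m then 3 * D else 0))
      sums (defect n f + 3 * D)"
    by (rule sums_add[OF defect_sums[OF f] sums_single])
  ultimately have "defect n (\<lambda>v. f v + f\<^sub>m v) = defect n f + 3 * D"
    by (simp add: defect_def sums_iff)
  with invariant supported_in_gen_l2(1)[OF supp_m] defect_m defect_f have "D = 0"
    by simp
  with gain_inj \<open>m \<noteq> n\<close> have "level_norm2 f m = 0"
    by (auto simp: D_def)
  then show ?thesis by (simp add: level_norm2_eq_0_iff)
qed

lemma supported_in_gen_iff_defect_invariant:
  assumes f: "f \<in> l2 V"
  shows "supported_in f (gen n) \<longleftrightarrow> (\<forall>g\<in>l2 V. defect n (\<lambda>v. f v + g v) = defect n g)"
proof
  assume "\<forall>g\<in>l2 V. defect n (\<lambda>v. f v + g v) = defect n g"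
  then have "\<forall>v\<in>gen m. f v = 0" if "m \<noteq> n" for m
    using defect_invariant_imp_vanishes_on_gen[OF f _ that] by blast
  then show "supported_in f (gen n)"
    using f Union_gen unfolding supported_in_def mem_l2_iff by (metis UN_iff)
qed (simp add: defect_add_supported_in_gen)

end

section \<open>Unitary equivalence of Dirichlet shifts\<close>

locale equal_generation_sizes =
  T1: dirichlet_tree V1 E1 r1 q + T2: dirichlet_tree V2 E2 r2 q
  for V1 :: "'a set" and E1 r1 and V2 :: "'b set" and E2 r2 and q +
  assumes card_gen_eq: "card (T1.gen n) = card (T2.gen n)"
begin

definition transfer :: "('a \<Rightarrow> complex) \<Rightarrow> 'b \<Rightarrow> complex" where
  "transfer f = T2.from_coeffs (T1.coeff f)"

lemma gain_eq: "T1.gain = T2.gain"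
  by (simp add: fun_eq_iff T1.gain_def T2.gain_def)

lemma level_norm2_transfer: "T2.level_norm2 (transfer f) n = T1.level_norm2 f n"
  unfolding transfer_def T2.level_norm2_from_coeffs T1.level_norm2_eq_coeff card_gen_eq ..

lemma transfer_l2: "f \<in> l2 V1 \<Longrightarrow> transfer f \<in> l2 V2"
  unfolding T1.mem_l2_iff_levels T2.mem_l2_iff_levels level_norm2_transfer[abs_def]
  by (simp add: transfer_def T2.supported_from_coeffs)

lemma l2_norm_transfer:
  assumes "f \<in> l2 V1"
  shows "l2_norm V2 (transfer f) = l2_norm V1 f"
proof -
  have "summable (T1.level_norm2 f)" "summable (T2.level_norm2 (transfer f))"
    using assms transfer_l2[OF assms] by (auto simp: T1.mem_l2_iff_levels T2.mem_l2_iff_levels)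
  then have "(l2_norm V2 (transfer f))\<^sup>2 = (l2_norm V1 f)\<^sup>2"
    by (simp add: T1.l2_norm_sq_eq_levels T2.l2_norm_sq_eq_levels level_norm2_transfer)
  then show ?thesis
    by (simp add: power2_eq_iff_nonneg l2_norm_nonneg)
qed

lemma transfer_add: "transfer (\<lambda>v. f v + g v) = (\<lambda>w. transfer f w + transfer g w)"
  unfolding transfer_def T1.coeff_add T2.from_coeffs_add ..

lemma transfer_scale: "transfer (\<lambda>v. c * f v) = (\<lambda>w. c * transfer f w)"
  unfolding transfer_def T1.coeff_scale T2.from_coeffs_scale ..

lemma transfer_shift: "transfer (T1.shift f) = T2.shift (transfer f)"
proof -
  have "T1.shift_coeff c n i = T2.shift_coeff c n i" for c n i
    by (simp add: T1.shift_coeff_def T2.shift_coeff_def card_gen_eq gain_eq split: nat.split)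
  then have "T2.from_coeffs (T1.coeff (T1.shift f)) = T2.from_coeffs (T2.shift_coeff (T1.coeff f))"
    by (intro T2.from_coeffs_cong) (simp add: T1.coeff_shift card_gen_eq)
  then show ?thesis
    by (simp add: transfer_def T2.shift_from_coeffs)
qed

lemma transfer_inverse: "f \<in> l2 V1 \<Longrightarrow> T1.from_coeffs (T2.coeff (transfer f)) = f"
proof -
  assume f: "f \<in> l2 V1"
  have "T1.from_coeffs (T2.coeff (transfer f)) = T1.from_coeffs (T1.coeff f)"
    unfolding transfer_def by (intro T1.from_coeffs_cong) (simp add: T2.coeff_from_coeffs card_gen_eq)
  also have "\<dots> = f"
    using f by (simp add: T1.from_coeffs_coeff mem_l2_iff)
  finally show ?thesis .
qed

end

lemma unitarily_equivalent_if_card_gen_eq: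
  assumes T1: "dirichlet_tree V1 E1 r1 q" and T2: "dirichlet_tree V2 E2 r2 q"
    and card_eq: "\<And>n. card (Chi_pow E1 n {r1}) = card (Chi_pow E2 n {r2})"
  shows "unitarily_equivalent V1 (dirichlet_shift V1 E1 r1 q) V2 (dirichlet_shift V2 E2 r2 q)"
proof -
  interpret equal_generation_sizes V1 E1 r1 V2 E2 r2 q
    using T1 T2 card_eq
    by (simp add: equal_generation_sizes_def equal_generation_sizes_axioms_def
        dirichlet_tree.gen_def)
  interpret inverse: equal_generation_sizes V2 E2 r2 V1 E1 r1 q
    using T1 T2 card_eq
    by (simp add: equal_generation_sizes_def equal_generation_sizes_axioms_def
        dirichlet_tree.gen_def)
  have inverse_transfer: "inverse.transfer g = T1.from_coeffs (T2.coeff g)" for g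
    by (simp add: inverse.transfer_def)
  have "bij_betw transfer (l2 V1) (l2 V2)"
  proof (rule bij_betw_byWitness[where f' = inverse.transfer])
    show "\<forall>f\<in>l2 V1. inverse.transfer (transfer f) = f"
      using transfer_inverse by (simp add: inverse_transfer)
    show "\<forall>g\<in>l2 V2. transfer (inverse.transfer g) = g"
      using inverse.transfer_inverse by (simp add: inverse_transfer transfer_def)
  qed (use transfer_l2 inverse.transfer_l2 in blast)+
  then show ?thesis
    unfolding unitarily_equivalent_def
    by (intro exI[of _ transfer]) (simp add: transfer_add transfer_scale l2_norm_transfer transfer_shift)
qed

locale intertwined_dirichlet_shifts =
  T1: dirichlet_tree V1 E1 r1 q + T2: dirichlet_tree V2 E2 r2 q
  for V1 :: "'a set" and E1 r1 and V2 :: "'b set" and E2 r2 and q +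
  fixes U :: "('a \<Rightarrow> complex) \<Rightarrow> 'b \<Rightarrow> complex"
  assumes bij: "bij_betw U (l2 V1) (l2 V2)"
    and add: "\<And>f g. f \<in> l2 V1 \<Longrightarrow> g \<in> l2 V1 \<Longrightarrow> U (\<lambda>v. f v + g v) = (\<lambda>w. U f w + U g w)"
    and scale: "\<And>f. f \<in> l2 V1 \<Longrightarrow> U (\<lambda>v. c * f v) = (\<lambda>w. c * U f w)"
    and norm: "\<And>f. f \<in> l2 V1 \<Longrightarrow> l2_norm V2 (U f) = l2_norm V1 f"
    and intertwine: "\<And>f. f \<in> l2 V1 \<Longrightarrow> U (T1.shift f) = T2.shift (U f)"
begin

lemma U_l2: "f \<in> l2 V1 \<Longrightarrow> U f \<in> l2 V2"
  using bij by (auto simp: bij_betw_def)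

lemma defect_U:
  assumes f: "f \<in> l2 V1"
  shows "T2.defect n (U f) = T1.defect n f"
proof -
  have "l2_norm V2 (T2.shift (U f)) = l2_norm V1 (T1.shift f)"
    using norm[OF T1.shift_l2[OF f]] intertwine[OF f] by simp
  then show ?thesis
    using T1.defect_eq_norms[OF f] T2.defect_eq_norms[OF U_l2[OF f]] norm[OF f]
    by (simp add: T1.gain_def T2.gain_def)
qed

lemma U_supported_in_gen:
  assumes supp: "supported_in f (T1.gen n)"
  shows "supported_in (U f) (T2.gen n)"
proof -
  have f: "f \<in> l2 V1" using T1.supported_in_gen_l2(1)[OF supp] .
  have "T2.defect n (\<lambda>w. U f w + g w) = T2.defect n g" if g: "g \<in> l2 V2" for g
  proof -
    obtain g' where g': "g' \<in> l2 V1" "g = U g'"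
      using g bij by (auto simp: bij_betw_def)
    then have "T2.defect n (\<lambda>w. U f w + g w) = T1.defect n (\<lambda>v. f v + g' v)"
      using add f defect_U[OF l2_add[OF f g'(1)]] by simp
    also have "\<dots> = T1.defect n g'"
      using T1.defect_add_supported_in_gen[OF supp] .
    finally show ?thesis using defect_U g' by simp
  qed
  then show ?thesis
    using T2.supported_in_gen_iff_defect_invariant[OF U_l2[OF f]] by blast
qed

lemma card_gen_le: "card (T1.gen n) \<le> card (T2.gen n)"
proof (rule card_le_if_isometric_on_supported[OF T1.finite_gen T2.finite_gen])
  fix f g c assume "supported_in f (T1.gen n)" "supported_in g (T1.gen n)"
  then have f: "f \<in> l2 V1" and g: "g \<in> l2 V1"
    by (simp_all add: T1.supported_in_gen_l2(1))
  show "U (\<lambda>x. f x + c * g x) = (\<lambda>y. U f y + c * U g y)"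
    using add[OF f l2_scale[OF g]] scale[OF g] by simp
next
  fix f assume f: "supported_in f (T1.gen n)"
  have "(l2_norm V2 (U f))\<^sup>2 = (l2_norm V1 f)\<^sup>2"
    using norm T1.supported_in_gen_l2(1)[OF f] by simp
  then show "inner_on (T2.gen n) (U f) (U f) = inner_on (T1.gen n) f f"
    by (simp add: T1.inner_on_gen_self T2.inner_on_gen_self
        T1.supported_in_gen_l2(2)[OF f] T2.supported_in_gen_l2(2)[OF U_supported_in_gen[OF f]])
qed

end

lemma card_gen_le_if_unitarily_equivalent:
  assumes T1: "dirichlet_tree V1 E1 r1 q" and T2: "dirichlet_tree V2 E2 r2 q"
    and "unitarily_equivalent V1 (dirichlet_shift V1 E1 r1 q) V2 (dirichlet_shift V2 E2 r2 q)"
  shows "card (Chi_pow E1 n {r1}) \<le> card (Chi_pow E2 n {r2})"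
proof -
  obtain U where "intertwined_dirichlet_shifts V1 E1 r1 V2 E2 r2 q U"
    using assms unfolding unitarily_equivalent_def intertwined_dirichlet_shifts_def
      intertwined_dirichlet_shifts_axioms_def by blast
  then interpret intertwined_dirichlet_shifts V1 E1 r1 V2 E2 r2 q U .
  show ?thesis using card_gen_le by (simp add: T1.gen_def T2.gen_def)
qed

lemma unitarily_equivalent_iff_card_gen_eq:
  assumes T1: "dirichlet_tree V1 E1 r1 q" and T2: "dirichlet_tree V2 E2 r2 q"
  shows "unitarily_equivalent V1 (dirichlet_shift V1 E1 r1 q) V2 (dirichlet_shift V2 E2 r2 q)
     \<longleftrightarrow> (\<forall>n. card (Chi_pow E1 n {r1}) = card (Chi_pow E2 n {r2}))"
proof
  assume ue: "unitarily_equivalent V1 (dirichlet_shift V1 E1 r1 q) V2 (dirichlet_shift V2 E2 r2 q)"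
  then have "unitarily_equivalent V2 (dirichlet_shift V2 E2 r2 q) V1 (dirichlet_shift V1 E1 r1 q)"
    by (rule unitarily_equivalent_sym) (rule dirichlet_tree.shift_l2[OF T1])
  with ue show "\<forall>n. card (Chi_pow E1 n {r1}) = card (Chi_pow E2 n {r2})"
    using card_gen_le_if_unitarily_equivalent[OF T1 T2] card_gen_le_if_unitarily_equivalent[OF T2 T1]
    by (simp add: le_antisym)
qed (use unitarily_equivalent_if_card_gen_eq[OF T1 T2] in blast)

lemma eq_iff_increments_eq:
  fixes x y :: "nat \<Rightarrow> nat"
  assumes "\<And>n. x n \<le> x (Suc n)" "\<And>n. y n \<le> y (Suc n)" "x 0 = y 0"
  shows "(\<forall>n. x n = y n) \<longleftrightarrow> (\<forall>n. x (Suc n) - x n = y (Suc n) - y n)"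
proof (intro iffI allI)
  fix n assume increments: "\<forall>n. x (Suc n) - x n = y (Suc n) - y n"
  show "x n = y n"
  proof (induction n)
    case (Suc n)
    with increments[rule_format, of n] assms(1,2)[of n] show ?case by arith
  qed (rule assms(3))
qed simp

theorem mainTheorem1:
  fixes V1 :: "'a set" and E1 :: "('a \<times> 'a) set" and r1 :: 'a
    and V2 :: "'b set" and E2 :: "('b \<times> 'b) set" and r2 :: 'b
    and q :: nat
  assumes "q \<ge> 2"
    and "rooted_tree V1 E1 r1" "leafless V1 E1" "locally_finite V1 E1"
    and "rooted_tree V2 E2 r2" "leafless V2 E2" "locally_finite V2 E2"
  shows "unitarily_equivalent V1 (dirichlet_shift V1 E1 r1 (real q))
                              V2 (dirichlet_shift V2 E2 r2 (real q))
     \<longleftrightarrow> (\<forall>n::nat.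
            (\<Sum>v\<in>branching V1 E1 \<inter> Chi_pow E1 n {r1}. card (Chi E1 v) - 1)
          = (\<Sum>v\<in>branching V2 E2 \<inter> Chi_pow E2 n {r2}. card (Chi E2 v) - 1))"
proof -
  have T1: "dirichlet_tree V1 E1 r1 (real q)" and T2: "dirichlet_tree V2 E2 r2 (real q)"
    using assms by (simp_all add: dirichlet_tree_def)
  interpret T1: dirichlet_tree V1 E1 r1 "real q" by (rule T1)
  interpret T2: dirichlet_tree V2 E2 r2 "real q" by (rule T2)
  show ?thesis
    unfolding unitarily_equivalent_iff_card_gen_eq[OF T1 T2] T1.gen_def[symmetric] T2.gen_def[symmetric]
      T1.branching_sum_eq T2.branching_sum_eq
    by (rule eq_iff_increments_eq) (simp_all add: T1.card_gen_le_Suc T2.card_gen_le_Suc)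
qed

end
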